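(* Let $P_0,P_1,P_2\in\mathbb H$ be distinct and set $d_0:=\sqrt{1-2\langle P_1,P_2\rangle}$, $d_1:=\sqrt{1-2\langle P_2,P_0\rangle}$, $d_2:=\sqrt{1-2\langle P_0,P_1\rangle}$ (indices in $\mathbb Z/3\mathbb Z$). Then for every $i\in\mathbb Z/3\mathbb Z$, $$d_i\ge\sqrt3\qquad\text{and}\qquad d_i^2-1\le(d_{i+1}^2-1)(d_{i+2}^2-1).$$
   Context: $\langle v,w\rangle=-v_1w_1+v_2w_2+v_3w_3$ on $\mathbb R^3$; $\mathbb H=\{P\in\mathbb R^3:\langle P,P\rangle=-1,\ P_1\ge1\}$. *)

theory Defs
  imports "HOL-Analysis.Analysis"
begin

definition mink :: "real^3 \<Rightarrow> real^3 \<Rightarrow> real" where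
  "mink v w = - (v$1 * w$1) + v$2 * w$2 + v$3 * w$3"

definition hyp :: "(real^3) set" where
  "hyp = {P. mink P P = -1 \<and> P$1 \<ge> 1}"

end

theory Submission
  imports Defs
begin

text \<open>
  Write \<open>c\<^sub>i = -\<langle>P\<^sub>i\<^sub>+\<^sub>1, P\<^sub>i\<^sub>+\<^sub>2\<rangle>\<close>, so that \<open>d\<^sub>i\<^sup>2 - 1 = 2 c\<^sub>i\<close>. The reverse Cauchy-Schwarz
  inequality on the hyperboloid gives \<open>c\<^sub>i \<ge> 1\<close>, i.e. \<open>d\<^sub>i \<ge> \<surd>3\<close>. Since the Minkowski form
  has signature \<open>(-,+,+)\<close>, the Gram determinant of \<open>P\<^sub>0, P\<^sub>1, P\<^sub>2\<close> is \<open>-det(P\<^sub>0,P\<^sub>1,P\<^sub>2)\<^sup>2 \<le> 0\<close>,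
  which reads \<open>c\<^sub>0\<^sup>2 + c\<^sub>1\<^sup>2 + c\<^sub>2\<^sup>2 - 1 - 2 c\<^sub>0 c\<^sub>1 c\<^sub>2 \<le> 0\<close>. Hence
  \<open>c\<^sub>i (c\<^sub>i - 2 c\<^sub>i\<^sub>+\<^sub>1 c\<^sub>i\<^sub>+\<^sub>2) \<le> 1 - c\<^sub>i\<^sub>+\<^sub>1\<^sup>2 - c\<^sub>i\<^sub>+\<^sub>2\<^sup>2 < 0\<close>, so \<open>c\<^sub>i \<le> 2 c\<^sub>i\<^sub>+\<^sub>1 c\<^sub>i\<^sub>+\<^sub>2\<close>, which is the
  second claim.
\<close>

lemma reverse_Cauchy_Schwarz:
  fixes a b x y z w :: real
  assumes "0 \<le> a" "0 \<le> b" "a\<^sup>2 = 1 + x\<^sup>2 + y\<^sup>2" "b\<^sup>2 = 1 + z\<^sup>2 + w\<^sup>2"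
  shows "x * z + y * w \<le> a * b - 1"
proof -
  have "(x * z + y * w)\<^sup>2 \<le> (x * z + y * w)\<^sup>2 + (x * w - y * z)\<^sup>2"
    by simp
  also have "\<dots> = (a\<^sup>2 - 1) * (b\<^sup>2 - 1)"
    using assms(3,4) by algebra
  also have "\<dots> = (a * b - 1)\<^sup>2 - (a - b)\<^sup>2"
    by algebra
  also have "\<dots> \<le> (a * b - 1)\<^sup>2"
    by simp
  finally have "(x * z + y * w)\<^sup>2 \<le> (a * b - 1)\<^sup>2" .
  moreover have "1 \<le> a" "1 \<le> b"
    using power2_le_imp_le[of 1 a] power2_le_imp_le[of 1 b] assms by simp_all
  then have "0 \<le> a * b - 1"
    using mult_mono[of 1 a 1 b] by simp
  ultimately show ?thesis
    by (rule power2_le_imp_le)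
qed

lemma mink_hyp_le:
  assumes "P \<in> hyp" "Q \<in> hyp"
  shows "mink P Q \<le> -1"
proof -
  have "(P$1)\<^sup>2 = 1 + (P$2)\<^sup>2 + (P$3)\<^sup>2" "(Q$1)\<^sup>2 = 1 + (Q$2)\<^sup>2 + (Q$3)\<^sup>2" "0 \<le> P$1" "0 \<le> Q$1"
    using assms by (auto simp: hyp_def mink_def power2_eq_square)
  from reverse_Cauchy_Schwarz[OF this(3,4,1,2)] show ?thesis
    by (simp add: mink_def)
qed

lemma mink_Gram_det:
  fixes u v w :: "real^3"
  shows "mink u u * mink v v * mink w w + 2 * mink u v * mink v w * mink w u
           - mink u u * (mink v w)\<^sup>2 - mink v v * (mink w u)\<^sup>2 - mink w w * (mink u v)\<^sup>2
         = - (det (vector [u, v, w] :: real^3^3))\<^sup>2"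
  unfolding mink_def det_3 vector_3 by algebra

lemma hyp_Gram_ineq:
  assumes "u \<in> hyp" "v \<in> hyp" "w \<in> hyp"
  shows "(mink v w)\<^sup>2 + (mink w u)\<^sup>2 + (mink u v)\<^sup>2 \<le> 1 - 2 * mink u v * mink v w * mink w u"
proof -
  have "mink u u = -1" "mink v v = -1" "mink w w = -1"
    using assms by (simp_all add: hyp_def)
  then have "2 * mink u v * mink v w * mink w u - 1 + (mink v w)\<^sup>2 + (mink w u)\<^sup>2 + (mink u v)\<^sup>2
      = - (det (vector [u, v, w] :: real^3^3))\<^sup>2"
    using mink_Gram_det[of u v w] by simp
  then show ?thesis
    using zero_le_power2[of "det (vector [u, v, w] :: real^3^3)"] by linarith
qed

lemma hyp_mink_triangle_bound:
  assumes "u \<in> hyp" "v \<in> hyp" "w \<in> hyp"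
  shows "- mink v w \<le> 2 * mink w u * mink u v"
proof -
  define a b c where "a = - mink v w" and "b = - mink w u" and "c = - mink u v"
  have "1 \<le> a" "1 \<le> b" "1 \<le> c"
    using mink_hyp_le[OF assms(2,3)] mink_hyp_le[OF assms(3,1)] mink_hyp_le[OF assms(1,2)]
    by (simp_all add: a_def b_def c_def)
  have "1 \<le> b\<^sup>2"
    using \<open>1 \<le> b\<close> by (rule one_le_power)
  then have "1 \<le> b\<^sup>2 + c\<^sup>2"
    using zero_le_power2[of c] by linarith
  moreover have "a * (a - 2 * b * c) \<le> 1 - b\<^sup>2 - c\<^sup>2"
    using hyp_Gram_ineq[OF assms] unfolding a_def b_def c_def
    by (simp add: algebra_simps power2_eq_square)
  ultimately have "a * (a - 2 * b * c) \<le> 0"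
    by simp
  with \<open>1 \<le> a\<close> have "a \<le> 2 * b * c"
    by (simp add: mult_le_0_iff)
  then show ?thesis
    by (simp add: a_def b_def c_def)
qed

theorem lemma3p2:
  fixes P :: "nat \<Rightarrow> real^3" and d :: "nat \<Rightarrow> real"
  assumes hP: "\<And>i. i < 3 \<Longrightarrow> P i \<in> hyp"
    and distinct: "P 0 \<noteq> P 1" "P 1 \<noteq> P 2" "P 2 \<noteq> P 0"
    and hd: "\<And>i. d i = sqrt (1 - 2 * mink (P ((i + 1) mod 3)) (P ((i + 2) mod 3)))"
  shows "\<forall>i<3. d i \<ge> sqrt 3 \<and>
           (d i)^2 - 1 \<le> ((d ((i + 1) mod 3))^2 - 1) * ((d ((i + 2) mod 3))^2 - 1)"
proof (intro allI impI)
  have le: "mink (P ((n + 1) mod 3)) (P ((n + 2) mod 3)) \<le> -1" for n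
    using mink_hyp_le[OF hP hP] by simp
  have d_sq: "(d n)\<^sup>2 - 1 = - 2 * mink (P ((n + 1) mod 3)) (P ((n + 2) mod 3))" for n
    unfolding hd using le[of n] by simp
  fix i :: nat
  assume "i < 3"
  define j k where "j = (i + 1) mod 3" and "k = (i + 2) mod 3"
  consider "i = 0" | "i = 1" | "i = 2"
    using \<open>i < 3\<close> by linarith
  then have "(j + 1) mod 3 = k" "(j + 2) mod 3 = i" "(k + 1) mod 3 = i" "(k + 2) mod 3 = j"
    unfolding j_def k_def by (cases; simp)+
  then have d_sq_ijk: "(d i)\<^sup>2 - 1 = - 2 * mink (P j) (P k)"
      "(d j)\<^sup>2 - 1 = - 2 * mink (P k) (P i)" "(d k)\<^sup>2 - 1 = - 2 * mink (P i) (P j)"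
    using d_sq[of i] d_sq[of j] d_sq[of k] by (simp_all add: j_def k_def)
  have "P i \<in> hyp" "P j \<in> hyp" "P k \<in> hyp"
    using hP \<open>i < 3\<close> by (simp_all add: j_def k_def)
  then have "- mink (P j) (P k) \<le> 2 * mink (P k) (P i) * mink (P i) (P j)"
    by (rule hyp_mink_triangle_bound)
  then have "(d i)\<^sup>2 - 1 \<le> 4 * (mink (P k) (P i) * mink (P i) (P j))"
    using d_sq_ijk(1) by linarith
  also have "\<dots> = ((d j)\<^sup>2 - 1) * ((d k)\<^sup>2 - 1)"
    unfolding d_sq_ijk(2,3) by algebra
  finally have "(d i)\<^sup>2 - 1 \<le> ((d j)\<^sup>2 - 1) * ((d k)\<^sup>2 - 1)" .
  moreover have "sqrt 3 \<le> d i"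
    unfolding hd using le[of i] by simp
  ultimately show "d i \<ge> sqrt 3 \<and>
           (d i)^2 - 1 \<le> ((d ((i + 1) mod 3))^2 - 1) * ((d ((i + 2) mod 3))^2 - 1)"
    by (simp add: j_def k_def)
qed

end
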